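(* Let $G=(V,E)$ be a finite simple undirected graph with zipper constraint collection $\mathcal{Z}$, let $D\subseteq Z^2$, and let $\mathbb{S}\subseteq D$ be a prescription on $D$. Let $S^+\subseteq V^+$ be a set of vertices of the augmented graph $G^+(\mathbb{S})$, and let $S\subseteq V$ be its distillate. Then $S^+$ is a clique in $G^+(\mathbb{S})$ if and only if $S$ is a clique in $G'=(V,E\setminus(D\setminus\mathbb{S}))$.
   Context: A zipper constraint collection for $G$ is a finite set $\mathcal{Z}=\{(U_1,W_1,y_1),\dots,(U_m,W_m,y_m)\}$, where each $U_i,W_i\in E$ is an edge of $G$ (a 2-element subset of $V$) and each $y_i$ is a label. Let $Z^2=\{U_1,\dots,U_m,W_1,\dots,W_m\}$. A prescription on a domain $D\subseteq Z^2$ is a subset $\mathbb{S}\subseteq D$. Its elements are on pairs, and the elements of $D\setminus\mathbb{S}$ are off pairs. Let $G'=(V,E\setminus(D\setminus\mathbb{S}))$. The augmented graph $G^+(\mathbb{S})=(V^+,E^+)$ has vertex set $V^+=\{[u]:u\in V\}\cup\{[u,w]:\{u,w\}\in\mathbb{S}\}$. Each vertex $[A]$ is a new formal vertex labeled by the set $A$, which is either a singleton $\{u\}$ or a pair $\{u,w\}$. Two distinct vertices $[A],[B]$ are adjacent if and only if $A\cup B$ is a clique in $G'$. The distillate of a set $S^+=\{[A_1],\dots,[A_n]\}\subseteq V^+$ is the set $A_1\cup\dots\cup A_n\subseteq V$. *)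

theory Defs
  imports Main
begin

definition simple_graph :: "'a set \<Rightarrow> 'a set set \<Rightarrow> bool" where
  "simple_graph V E \<longleftrightarrow> finite V \<and> (\<forall>e\<in>E. e \<subseteq> V \<and> card e = 2)"

definition is_clique :: "'a set \<Rightarrow> 'a set set \<Rightarrow> 'a set \<Rightarrow> bool" where
  "is_clique V E K \<longleftrightarrow> K \<subseteq> V \<and> (\<forall>u\<in>K. \<forall>w\<in>K. u \<noteq> w \<longrightarrow> {u, w} \<in> E)"

definition zipper_collection :: "'a set set \<Rightarrow> ('a set \<times> 'a set \<times> 'b) set \<Rightarrow> bool" where
  "zipper_collection E Z \<longleftrightarrow> finite Z \<and> (\<forall>(U, W, y)\<in>Z. U \<in> E \<and> W \<in> E)"

definition Z2 :: "('a set \<times> 'a set \<times> 'b) set \<Rightarrow> 'a set set" where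
  "Z2 Z = (\<lambda>(U, W, y). U) ` Z \<union> (\<lambda>(U, W, y). W) ` Z"

definition Gprime_edges :: "'a set set \<Rightarrow> 'a set set \<Rightarrow> 'a set set \<Rightarrow> 'a set set" where
  "Gprime_edges E D S = E - (D - S)"

text \<open>Formal vertices [A] of the augmented graph, labelled by a set A.\<close>
datatype 'a aug_vertex = AV (label: "'a set")

definition aug_vertices :: "'a set \<Rightarrow> 'a set set \<Rightarrow> 'a aug_vertex set" where
  "aug_vertices V S = {AV {u} | u. u \<in> V} \<union> {AV {u, w} | u w. {u, w} \<in> S}"

definition aug_adj :: "'a set \<Rightarrow> 'a set set \<Rightarrow> 'a set set \<Rightarrow> 'a set set
    \<Rightarrow> 'a aug_vertex \<Rightarrow> 'a aug_vertex \<Rightarrow> bool" where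
  "aug_adj V E D S x y \<longleftrightarrow> x \<noteq> y \<and> is_clique V (Gprime_edges E D S) (label x \<union> label y)"

definition is_aug_clique :: "'a set \<Rightarrow> 'a set set \<Rightarrow> 'a set set \<Rightarrow> 'a set set
    \<Rightarrow> 'a aug_vertex set \<Rightarrow> bool" where
  "is_aug_clique V E D S K \<longleftrightarrow> K \<subseteq> aug_vertices V S \<and>
     (\<forall>x\<in>K. \<forall>y\<in>K. x \<noteq> y \<longrightarrow> aug_adj V E D S x y)"

definition distillate :: "'a aug_vertex set \<Rightarrow> 'a set" where
  "distillate K = \<Union> (label ` K)"

end

theory Submission
  imports Defs
begin

text \<open>Every vertex label of the augmented graph is itself a clique of G': a singleton, or an
  on pair, which is an edge of G that survives in G'. A union of sets is a clique exactly when
  the union of any two of them is, so the distillate of S+ is a clique of G' exactly when any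
  two distinct vertices of S+ are adjacent.\<close>

lemma is_clique_subset: "is_clique V E K \<Longrightarrow> L \<subseteq> K \<Longrightarrow> is_clique V E L"
  unfolding is_clique_def by blast

lemma is_clique_Union_iff:
  "is_clique V E (\<Union> (f ` I)) \<longleftrightarrow> (\<forall>i\<in>I. \<forall>j\<in>I. is_clique V E (f i \<union> f j))"
proof
  assume "is_clique V E (\<Union> (f ` I))"
  then show "\<forall>i\<in>I. \<forall>j\<in>I. is_clique V E (f i \<union> f j)"
    by (auto elim: is_clique_subset)
next
  assume pairs: "\<forall>i\<in>I. \<forall>j\<in>I. is_clique V E (f i \<union> f j)"
  show "is_clique V E (\<Union> (f ` I))"
    unfolding is_clique_def
  proof (intro conjI ballI impI)
    show "\<Union> (f ` I) \<subseteq> V"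
      using pairs unfolding is_clique_def by blast
  next
    fix u w assume "u \<in> \<Union> (f ` I)" "w \<in> \<Union> (f ` I)" "u \<noteq> w"
    then obtain i j where "i \<in> I" "j \<in> I" "u \<in> f i \<union> f j" "w \<in> f i \<union> f j"
      by blast
    with pairs \<open>u \<noteq> w\<close> show "{u, w} \<in> E"
      unfolding is_clique_def by blast
  qed
qed

lemma Z2_subset_edges: "zipper_collection E Z \<Longrightarrow> Z2 Z \<subseteq> E"
  unfolding zipper_collection_def Z2_def by fastforce

lemma is_clique_label_aug_vertex:
  assumes "simple_graph V E" "S \<subseteq> E" "x \<in> aug_vertices V S"
  shows "is_clique V (Gprime_edges E D S) (label x)"
proof -
  from assms(3) consider u where "x = AV {u}" "u \<in> V" | u w where "x = AV {u, w}" "{u, w} \<in> S"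
    unfolding aug_vertices_def by blast
  then show ?thesis
  proof cases
    case 1
    then show ?thesis
      unfolding is_clique_def by auto
  next
    case (2 u w)
    have "{u, w} \<subseteq> V"
      using 2 assms(1,2) unfolding simple_graph_def by blast
    moreover have "{u, w} \<in> Gprime_edges E D S"
      using 2 assms(2) unfolding Gprime_edges_def by blast
    ultimately show ?thesis
      unfolding 2 is_clique_def by (auto simp: insert_commute)
  qed
qed

theorem mainTheorem2:
  fixes V :: "'a set" and E :: "'a set set" and Z :: "('a set \<times> 'a set \<times> 'b) set"
    and D S :: "'a set set" and Splus :: "'a aug_vertex set"
  assumes "simple_graph V E"
    and "zipper_collection E Z"
    and "D \<subseteq> Z2 Z"
    and "S \<subseteq> D"
    and "Splus \<subseteq> aug_vertices V S"
  shows "is_aug_clique V E D S Splus \<longleftrightarrow> is_clique V (Gprime_edges E D S) (distillate Splus)"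
proof -
  let ?G' = "Gprime_edges E D S"
  have "S \<subseteq> E"
    using assms(2-4) Z2_subset_edges by blast
  then have label_clique: "is_clique V ?G' (label x)" if "x \<in> Splus" for x
    using is_clique_label_aug_vertex assms(1,5) that by blast
  have "is_aug_clique V E D S Splus \<longleftrightarrow>
      (\<forall>x\<in>Splus. \<forall>y\<in>Splus. x \<noteq> y \<longrightarrow> is_clique V ?G' (label x \<union> label y))"
    using assms(5) unfolding is_aug_clique_def aug_adj_def by blast
  also have "\<dots> \<longleftrightarrow> (\<forall>x\<in>Splus. \<forall>y\<in>Splus. is_clique V ?G' (label x \<union> label y))"
    using label_clique by (metis sup.idem)
  also have "\<dots> \<longleftrightarrow> is_clique V ?G' (distillate Splus)"
    unfolding distillate_def by (rule is_clique_Union_iff[symmetric])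
  finally show ?thesis .
qed

end
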